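(* Let $G=(V,E)$ be a graph with capacities $b_v\ge0$, demands $d_{u,e},d_{v,e}\ge0$ and profits $p_e\ge0$ for each edge $e=uv$, forming a conflict-free instance. Let $M'\subseteq E$ satisfy $\sum_{e\in\delta_{M'}(v)\setminus L(v)}d_{v,e}\le b_v$ for every $v\in V$, where $L(v)$ is a set of the two edges of $\delta_{M'}(v)$ with highest $d_{v,e}$ (or $L(v)=\delta_{M'}(v)$ if $|\delta_{M'}(v)|\le1$). Then one can find $M\subseteq M'$ with $\sum_{e\in\delta_M(v)}d_{v,e}\le b_v$ for all $v\in V$ and $p(M)\ge\frac{p(M')}{4}$.
   Context: The instance is conflict-free if for any two edges $e,f\in E$ and every vertex $v$, $\sum_{g\in\{e,f\}\cap\delta(v)}d_{v,g}\le b_v$. $\delta(v)$ is the set of edges incident to $v$, $\delta_{M'}(v)=\delta(v)\cap M'$, $p(M)=\sum_{e\in M}p_e$. *)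

theory Defs
  imports Complex_Main
begin

definition is_graph :: "'a set \<Rightarrow> 'a set set \<Rightarrow> bool" where
  "is_graph V E \<longleftrightarrow> finite V \<and> (\<forall>e\<in>E. e \<subseteq> V \<and> card e = 2)"

definition delta :: "'a set set \<Rightarrow> 'a \<Rightarrow> 'a set set" where
  "delta F v = {e\<in>F. v \<in> e}"

definition conflict_free ::
  "'a set \<Rightarrow> 'a set set \<Rightarrow> ('a \<Rightarrow> real) \<Rightarrow> ('a \<Rightarrow> 'a set \<Rightarrow> real) \<Rightarrow> bool" where
  "conflict_free V E b d \<longleftrightarrow>
     (\<forall>e\<in>E. \<forall>f\<in>E. \<forall>v\<in>V. (\<Sum>g\<in>{e,f} \<inter> delta E v. d v g) \<le> b v)"

definition top_two :: "('a \<Rightarrow> 'a set \<Rightarrow> real) \<Rightarrow> 'a set set \<Rightarrow> 'a \<Rightarrow> 'a set set \<Rightarrow> bool" where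
  "top_two d M' v L \<longleftrightarrow> L \<subseteq> delta M' v \<and> card L = min 2 (card (delta M' v)) \<and>
     (\<forall>e\<in>L. \<forall>f\<in>delta M' v - L. d v f \<le> d v e)"

end

theory Submission
  imports Defs
begin

text \<open>Choose for every vertex v a set L v as in the hypothesis and, for a set S of vertices,
  keep an edge uv exactly when, at each endpoint w, the edge lies in L w iff w lies in S.
  At a vertex of S the kept edges are among the two edges of L v, which fit by
  conflict-freeness; at a vertex outside S they avoid L v, which fits by hypothesis.
  Every edge is kept for exactly a quarter of all S (its two endpoints are forced),
  so averaging over S gives a kept set with at least a quarter of the profit.\<close>

definition kept :: "('a \<Rightarrow> 'a set set) \<Rightarrow> 'a set set \<Rightarrow> 'a set \<Rightarrow> 'a set set" where
  "kept L M S = {e \<in> M. \<forall>w\<in>e. e \<in> L w \<longleftrightarrow> w \<in> S}"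

lemma kept_subset: "kept L M S \<subseteq> M"
  by (auto simp: kept_def)

lemma card_Pow_inter_eq:
  assumes "finite V" "e \<subseteq> V" "A \<subseteq> e"
  shows "card {S \<in> Pow V. S \<inter> e = A} = 2 ^ card (V - e)"
proof -
  have "bij_betw (\<lambda>T. T \<union> A) (Pow (V - e)) {S \<in> Pow V. S \<inter> e = A}"
    by (rule bij_betw_byWitness[where f' = "\<lambda>S. S - e"]) (use assms in auto)
  then have "card (Pow (V - e)) = card {S \<in> Pow V. S \<inter> e = A}"
    by (rule bij_betw_same_card)
  then show ?thesis
    using assms(1) by (simp add: card_Pow)
qed

lemma card_kept_choices:
  assumes "finite V" "e \<in> M" "e \<subseteq> V"
  shows "card {S \<in> Pow V. e \<in> kept L M S} = 2 ^ card (V - e)"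
proof -
  have "{S \<in> Pow V. e \<in> kept L M S} = {S \<in> Pow V. S \<inter> e = {w \<in> e. e \<in> L w}}"
    using assms(2) by (auto simp: kept_def)
  then show ?thesis
    using card_Pow_inter_eq[OF assms(1,3)] by simp
qed

lemma sum_sum_eq_sum_card_mult:
  fixes p :: "'b \<Rightarrow> 'c::comm_semiring_1"
  assumes "finite I" "finite X" "\<And>i. i \<in> I \<Longrightarrow> F i \<subseteq> X"
  shows "(\<Sum>i\<in>I. sum p (F i)) = (\<Sum>x\<in>X. of_nat (card {i \<in> I. x \<in> F i}) * p x)"
proof -
  have "(\<Sum>i\<in>I. sum p (F i)) = (\<Sum>i\<in>I. \<Sum>x\<in>X. if x \<in> F i then p x else 0)"
  proof (rule sum.cong[OF refl])
    fix i assume "i \<in> I"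
    then have "X \<inter> F i = F i"
      using assms(3) by blast
    then show "sum p (F i) = (\<Sum>x\<in>X. if x \<in> F i then p x else 0)"
      using sum.inter_restrict[OF assms(2), of p "F i"] by simp
  qed
  also have "\<dots> = (\<Sum>x\<in>X. \<Sum>i\<in>I. if x \<in> F i then p x else 0)"
    by (rule sum.swap)
  also have "\<dots> = (\<Sum>x\<in>X. \<Sum>i\<in>{i \<in> I. x \<in> F i}. p x)"
    by (simp only: sum.inter_filter[OF assms(1)])
  also have "\<dots> = (\<Sum>x\<in>X. of_nat (card {i \<in> I. x \<in> F i}) * p x)"
    by simp
  finally show ?thesis .
qed

lemma conflict_free_sum_le:
  assumes "conflict_free V E b d" "v \<in> V" "0 \<le> b v"
    and "F \<subseteq> delta E v" "finite F" "card F \<le> 2"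
  shows "(\<Sum>e\<in>F. d v e) \<le> b v"
proof (cases "F = {}")
  case False
  then obtain e f where F: "F = {e, f}"
    using assms(5,6) by (metis One_nat_def Suc_1 card_1_singletonE card_2_iff card_eq_0_iff
        insert_absorb2 le_0_eq nle_le not_less_eq_eq)
  then have "e \<in> E" "f \<in> E" and F_delta: "{e, f} \<inter> delta E v = F"
    using assms(4) by (auto simp: delta_def)
  then have "(\<Sum>g\<in>{e, f} \<inter> delta E v. d v g) \<le> b v"
    using assms(1,2) unfolding conflict_free_def by blast
  then show ?thesis
    by (simp only: F_delta)
qed (use assms in simp)

lemma sum_delta_kept_le:
  assumes "conflict_free V E b d" "v \<in> V" "0 \<le> b v" "M \<subseteq> E"
    and "\<forall>e\<in>E. \<forall>w\<in>e. d w e \<ge> 0" "finite M"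
    and "top_two d M v (L v)" "(\<Sum>e\<in>delta M v - L v. d v e) \<le> b v"
  shows "(\<Sum>e\<in>delta (kept L M S) v. d v e) \<le> b v"
proof (cases "v \<in> S")
  case True
  have sub: "delta (kept L M S) v \<subseteq> L v"
    using True by (auto simp: delta_def kept_def)
  have L: "L v \<subseteq> delta M v" "card (L v) \<le> 2"
    using assms(7) by (auto simp: top_two_def)
  have "finite (L v)"
    using L(1) assms(6) by (auto simp: delta_def intro: finite_subset)
  then show ?thesis
    using L sub assms(4) by (intro conflict_free_sum_le[OF assms(1-3)])
      (auto simp: delta_def intro: finite_subset card_mono[THEN order_trans])
next
  case False
  have sub: "delta (kept L M S) v \<subseteq> delta M v - L v"
    using False by (auto simp: delta_def kept_def)
  have "(\<Sum>e\<in>delta (kept L M S) v. d v e) \<le> (\<Sum>e\<in>delta M v - L v. d v e)"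
    using assms(4-6) sub by (intro sum_mono2) (auto simp: delta_def)
  then show ?thesis
    using assms(8) by linarith
qed

lemma exists_kept_profit_ge_quarter:
  fixes p :: "'a set \<Rightarrow> real"
  assumes "finite V" "M \<noteq> {}" "\<forall>e\<in>M. e \<subseteq> V \<and> card e = 2"
  shows "\<exists>S\<in>Pow V. sum p (kept L M S) \<ge> sum p M / 4"
proof (rule ccontr)
  assume "\<not> ?thesis"
  then have less: "\<forall>S\<in>Pow V. sum p (kept L M S) < sum p M / 4"
    by (auto simp: not_le)
  have finM: "finite M"
    using assms(1,3) finite_subset[of M "Pow V"] by auto
  have "card V \<ge> 2"
    using assms by (metis all_not_in_conv card_mono)
  then have "card V = (card V - 2) + 2"
    by simp
  then have card_Pow_V: "card (Pow V) = 2 ^ (card V - 2) * 2 ^ 2"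
    using assms(1) by (metis card_Pow power_add)
  have choices: "card {S \<in> Pow V. e \<in> kept L M S} = 2 ^ (card V - 2)" if "e \<in> M" for e
  proof -
    have "e \<subseteq> V" "card e = 2"
      using assms(3) that by auto
    then show ?thesis
      using card_kept_choices[OF assms(1) that] assms(1) by (metis card_Diff_subset finite_subset)
  qed
  have "(\<Sum>S\<in>Pow V. sum p (kept L M S))
      = (\<Sum>e\<in>M. of_nat (card {S \<in> Pow V. e \<in> kept L M S}) * p e)"
    using assms(1) finM kept_subset by (intro sum_sum_eq_sum_card_mult) auto
  also have "\<dots> = 2 ^ (card V - 2) * sum p M"
    using choices by (simp add: sum_distrib_left)
  finally have total: "(\<Sum>S\<in>Pow V. sum p (kept L M S)) = 2 ^ (card V - 2) * sum p M" .
  have "(\<Sum>S\<in>Pow V. sum p (kept L M S)) < of_nat (card (Pow V)) * (sum p M / 4)"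
    by (rule sum_bounded_above_strict) (use less assms(1) in \<open>auto simp: card_gt_0_iff\<close>)
  then show False
    using total by (simp add: card_Pow_V)
qed

theorem lemma5:
  fixes V :: "'a set" and E :: "'a set set"
    and b :: "'a \<Rightarrow> real" and d :: "'a \<Rightarrow> 'a set \<Rightarrow> real" and p :: "'a set \<Rightarrow> real"
    and M' :: "'a set set"
  assumes "is_graph V E"
    and "\<forall>v\<in>V. b v \<ge> 0"
    and "\<forall>e\<in>E. \<forall>v\<in>e. d v e \<ge> 0"
    and "\<forall>e\<in>E. p e \<ge> 0"
    and "conflict_free V E b d"
    and "M' \<subseteq> E"
    and "\<forall>v\<in>V. \<exists>L. top_two d M' v L \<and> (\<Sum>e\<in>delta M' v - L. d v e) \<le> b v"
  shows "\<exists>M\<subseteq>M'. (\<forall>v\<in>V. (\<Sum>e\<in>delta M v. d v e) \<le> b v) \<and> sum p M \<ge> sum p M' / 4"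
proof (cases "M' = {}")
  case True
  then show ?thesis
    using assms(2) by (auto simp: delta_def)
next
  case False
  have V: "finite V" and M': "\<forall>e\<in>M'. e \<subseteq> V \<and> card e = 2"
    using assms(1,6) by (auto simp: is_graph_def)
  then have "finite M'"
    using finite_subset[of M' "Pow V"] by auto
  obtain L where L: "\<forall>v\<in>V. top_two d M' v (L v) \<and> (\<Sum>e\<in>delta M' v - L v. d v e) \<le> b v"
    using bchoice[OF assms(7)] by blast
  obtain S where "sum p (kept L M' S) \<ge> sum p M' / 4"
    using exists_kept_profit_ge_quarter[OF V False M'] by blast
  moreover have "(\<Sum>e\<in>delta (kept L M' S) v. d v e) \<le> b v" if "v \<in> V" for v
    using that assms(2) L
    by (intro sum_delta_kept_le[OF assms(5) _ _ assms(6,3) \<open>finite M'\<close>]) auto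
  ultimately show ?thesis
    using kept_subset[of L M' S] by blast
qed

end
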